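(* For all integers $n$ and $\alpha$ with $n<\alpha\le 2^n$, there exists a minimal $n$-state nondeterministic finite automaton accepting a prefix-closed language whose equivalent minimal deterministic finite automaton has exactly $\alpha$ states. Moreover, if a minimal $n$-state nondeterministic finite automaton accepts a prefix-closed language whose equivalent minimal deterministic finite automaton has exactly $n$ states, then $n=1$.
   Context: NFAs have a single initial state and a transition function $\delta:Q\times\Sigma\to 2^Q$ that may map to the empty set (no sink state is needed or counted); DFAs are complete, so a sink state is counted. A minimal $n$-state NFA is an NFA with $n$ states such that no NFA with fewer states accepts the same language. A language $L\subseteq\Sigma^*$ is prefix-closed if $xy\in L$ implies $x\in L$ for all $x,y\in\Sigma^*$. *)

theory Defs
  imports Main
begin

record ('q, 'a) nfa =
  nstates :: "'q set"
  ninit   :: "'q"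
  ndelta  :: "'q \<Rightarrow> 'a \<Rightarrow> 'q set"
  nfinal  :: "'q set"

definition nfa_wf :: "'a set \<Rightarrow> ('q, 'a) nfa \<Rightarrow> bool" where
  "nfa_wf \<Sigma> M \<longleftrightarrow> finite (nstates M) \<and> ninit M \<in> nstates M \<and> nfinal M \<subseteq> nstates M \<and>
     (\<forall>q\<in>nstates M. \<forall>a\<in>\<Sigma>. ndelta M q a \<subseteq> nstates M)"

fun nsteps :: "('q \<Rightarrow> 'a \<Rightarrow> 'q set) \<Rightarrow> 'q set \<Rightarrow> 'a list \<Rightarrow> 'q set" where
  "nsteps d S [] = S"
| "nsteps d S (a # w) = nsteps d (\<Union>q\<in>S. d q a) w"

definition nlang :: "'a set \<Rightarrow> ('q, 'a) nfa \<Rightarrow> 'a list set" where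
  "nlang \<Sigma> M = {w \<in> lists \<Sigma>. nsteps (ndelta M) {ninit M} w \<inter> nfinal M \<noteq> {}}"

text \<open>M is a minimal NFA over alphabet \<Sigma>: no NFA with fewer states accepts the same
  language (state sets are arbitrary finite sets of naturals, which covers all NFAs up to renaming).\<close>
definition minimal_nfa :: "'a set \<Rightarrow> ('q, 'a) nfa \<Rightarrow> bool" where
  "minimal_nfa \<Sigma> M \<longleftrightarrow> nfa_wf \<Sigma> M \<and>
     (\<forall>M' :: (nat, 'a) nfa. nfa_wf \<Sigma> M' \<and> nlang \<Sigma> M' = nlang \<Sigma> M \<longrightarrow>
        card (nstates M) \<le> card (nstates M'))"

record ('q, 'a) dfa =
  dstates :: "'q set"
  dinit   :: "'q"
  ddelta  :: "'q \<Rightarrow> 'a \<Rightarrow> 'q"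
  dfinal  :: "'q set"

definition dfa_wf :: "'a set \<Rightarrow> ('q, 'a) dfa \<Rightarrow> bool" where
  "dfa_wf \<Sigma> M \<longleftrightarrow> finite (dstates M) \<and> dinit M \<in> dstates M \<and> dfinal M \<subseteq> dstates M \<and>
     (\<forall>q\<in>dstates M. \<forall>a\<in>\<Sigma>. ddelta M q a \<in> dstates M)"

definition dlang :: "'a set \<Rightarrow> ('q, 'a) dfa \<Rightarrow> 'a list set" where
  "dlang \<Sigma> M = {w \<in> lists \<Sigma>. fold (\<lambda>a q. ddelta M q a) w (dinit M) \<in> dfinal M}"

definition min_dfa_size :: "'a set \<Rightarrow> 'a list set \<Rightarrow> nat" where
  "min_dfa_size \<Sigma> L = (LEAST k. \<exists>M :: (nat, 'a) dfa. dfa_wf \<Sigma> M \<and> dlang \<Sigma> M = L \<and> card (dstates M) = k)"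

definition prefix_closed :: "'a list set \<Rightarrow> bool" where
  "prefix_closed L \<longleftrightarrow> (\<forall>x y. x @ y \<in> L \<longrightarrow> x \<in> L)"

end

theory Submission
  imports Defs
begin

text \<open>
  For the witness take states \<open>0..<n\<close>, all accepting: "jump" letters \<open>a < m\<close> send state 0 to a
  nonempty set \<open>e a\<close>, and "test" letters \<open>m + i\<close> keep state \<open>i\<close> and kill all others. The
  reachable subsets are exactly the \<open>m\<close> sets \<open>e a\<close> and the empty set, pairwise separated by
  test letters, so the minimal DFA has \<open>m + 1\<close> states. If every singleton occurs among the
  \<open>e a\<close>, the pairs (jump to \<open>{i}\<close>, test \<open>i\<close>) form a fooling set, so no NFA has fewer than
  \<open>n\<close> states; such families exist for every \<open>n \<le> m < 2\<^sup>n\<close>.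

  Conversely, if a prefix-closed language is neither empty nor universal, some word is rejected,
  and the state it leads to in any DFA is dead. Deleting that state yields an NFA, so every DFA
  has more states than a minimal NFA.
\<close>

lemma nsteps_empty [simp]: "nsteps d {} w = {}"
  by (induction w) auto

lemma nsteps_append: "nsteps d S (x @ y) = nsteps d (nsteps d S x) y"
  by (induction x arbitrary: S) auto

lemma nsteps_UN: "nsteps d (\<Union>i\<in>I. S i) w = (\<Union>i\<in>I. nsteps d (S i) w)"
proof (induction w arbitrary: S)
  case (Cons a w)
  have "(\<Union>q\<in>(\<Union>i\<in>I. S i). d q a) = (\<Union>i\<in>I. \<Union>q\<in>S i. d q a)" by blast
  then show ?case using Cons.IH[of "\<lambda>i. \<Union>q\<in>S i. d q a"] by simp
qed simp

lemma nsteps_eq_UN_singletons: "nsteps d S w = (\<Union>q\<in>S. nsteps d {q} w)"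
  using nsteps_UN[of d "\<lambda>q. {q}" S] by simp

lemma nsteps_closed:
  assumes "\<And>q a. q \<in> Q \<Longrightarrow> a \<in> \<Sigma> \<Longrightarrow> d q a \<subseteq> Q" and "S \<subseteq> Q" and "w \<in> lists \<Sigma>"
  shows "nsteps d S w \<subseteq> Q"
  using assms(2,3)
proof (induction w arbitrary: S)
  case (Cons a w)
  have a: "a \<in> \<Sigma>" using Cons.prems(2) by simp
  have "(\<Union>q\<in>S. d q a) \<subseteq> Q" using Cons.prems(1) assms(1)[OF _ a] by blast
  then show ?case using Cons.IH Cons.prems(2) by simp
qed simp

lemma fold_subset_step_eq_nsteps: "fold (\<lambda>a S. \<Union>q\<in>S. d q a) w S = nsteps d S w"
  by (induction w arbitrary: S) simp_all

lemma nfa_nsteps_in_states: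
  "nfa_wf \<Sigma> M \<Longrightarrow> S \<subseteq> nstates M \<Longrightarrow> w \<in> lists \<Sigma> \<Longrightarrow> nsteps (ndelta M) S w \<subseteq> nstates M"
  by (rule nsteps_closed) (auto simp: nfa_wf_def)

lemma nlang_append_iff:
  "x @ y \<in> nlang \<Sigma> M \<longleftrightarrow> x \<in> lists \<Sigma> \<and> y \<in> lists \<Sigma> \<and>
     (\<exists>p\<in>nsteps (ndelta M) {ninit M} x. nsteps (ndelta M) {p} y \<inter> nfinal M \<noteq> {})"
  using nsteps_eq_UN_singletons[of "ndelta M" "nsteps (ndelta M) {ninit M} x" y]
  by (auto simp: nlang_def nsteps_append)

abbreviation drun :: "('q, 'a) dfa \<Rightarrow> 'a list \<Rightarrow> 'q \<Rightarrow> 'q" where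
  "drun D w q \<equiv> fold (\<lambda>a q. ddelta D q a) w q"

lemma drun_in_states:
  "dfa_wf \<Sigma> D \<Longrightarrow> q \<in> dstates D \<Longrightarrow> w \<in> lists \<Sigma> \<Longrightarrow> drun D w q \<in> dstates D"
  by (induction w arbitrary: q) (auto simp: dfa_wf_def)

lemma dlang_append_iff:
  "x @ y \<in> dlang \<Sigma> D \<longleftrightarrow> x \<in> lists \<Sigma> \<and> y \<in> lists \<Sigma> \<and> drun D y (drun D x (dinit D)) \<in> dfinal D"
  by (auto simp: dlang_def)

lemma dfa_rename_nat:
  assumes wf: "dfa_wf \<Sigma> (D :: ('q, 'a) dfa)"
  obtains D' :: "(nat, 'a) dfa"
  where "dfa_wf \<Sigma> D'" "dlang \<Sigma> D' = dlang \<Sigma> D" "card (dstates D') = card (dstates D)"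
proof -
  let ?Q = "dstates D"
  have "finite ?Q" using wf by (simp add: dfa_wf_def)
  then obtain h :: "'q \<Rightarrow> nat" where h: "inj_on h ?Q"
    using finite_imp_inj_to_nat_seg by meson
  define D' where "D' = \<lparr>dstates = h ` ?Q, dinit = h (dinit D),
      ddelta = (\<lambda>p a. h (ddelta D (inv_into ?Q h p) a)), dfinal = h ` dfinal D\<rparr>"
  have run: "drun D' w (h q) = h (drun D w q)" if "q \<in> ?Q" "w \<in> lists \<Sigma>" for q w
    using that
  proof (induction w arbitrary: q)
    case (Cons a w)
    have "ddelta D' (h q) a = h (ddelta D q a)" using Cons.prems(1) h by (simp add: D'_def)
    moreover have "ddelta D q a \<in> ?Q" using Cons.prems wf by (auto simp: dfa_wf_def)
    ultimately show ?case using Cons.IH Cons.prems(2) by simp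
  qed simp
  have init: "dinit D \<in> ?Q" and final: "dfinal D \<subseteq> ?Q" using wf by (auto simp: dfa_wf_def)
  have "drun D' w (dinit D') \<in> dfinal D' \<longleftrightarrow> drun D w (dinit D) \<in> dfinal D"
    if "w \<in> lists \<Sigma>" for w
  proof -
    have "drun D' w (dinit D') = h (drun D w (dinit D))"
      using run[OF init that] by (simp add: D'_def)
    then show ?thesis
      using inj_on_image_mem_iff[OF h drun_in_states[OF wf init that] final] by (simp add: D'_def)
  qed
  then have "dlang \<Sigma> D' = dlang \<Sigma> D" by (auto simp: dlang_def)
  moreover have "dfa_wf \<Sigma> D'" using wf h by (auto simp: dfa_wf_def D'_def)
  moreover have "card (dstates D') = card ?Q" using h by (simp add: D'_def card_image)
  ultimately show thesis using that by blast
qed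

lemma min_dfa_size_le:
  assumes "dfa_wf \<Sigma> D"
  shows "min_dfa_size \<Sigma> (dlang \<Sigma> D) \<le> card (dstates D)"
proof -
  have "\<exists>D' :: (nat, 'a) dfa. dfa_wf \<Sigma> D' \<and> dlang \<Sigma> D' = dlang \<Sigma> D \<and>
      card (dstates D') = card (dstates D)"
    by (rule dfa_rename_nat[OF assms]) blast
  then show ?thesis unfolding min_dfa_size_def by (rule Least_le)
qed

lemma min_dfa_size_attained:
  assumes "dfa_wf \<Sigma> D"
  obtains D' :: "(nat, 'a) dfa"
  where "dfa_wf \<Sigma> D'" "dlang \<Sigma> D' = dlang \<Sigma> D" "card (dstates D') = min_dfa_size \<Sigma> (dlang \<Sigma> D)"
proof -
  have "\<exists>k. \<exists>D' :: (nat, 'a) dfa. dfa_wf \<Sigma> D' \<and> dlang \<Sigma> D' = dlang \<Sigma> D \<and> card (dstates D') = k"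
    by (rule dfa_rename_nat[OF assms]) blast
  from LeastI_ex[OF this] show thesis
    using that unfolding min_dfa_size_def by blast
qed

lemma card_le_dfa_states_if_distinguishable:
  assumes wf: "dfa_wf \<Sigma> D" and words: "u ` I \<subseteq> lists \<Sigma>"
    and dist: "\<And>i j. i \<in> I \<Longrightarrow> j \<in> I \<Longrightarrow> i \<noteq> j \<Longrightarrow>
      \<exists>v\<in>lists \<Sigma>. (u i @ v \<in> dlang \<Sigma> D) \<noteq> (u j @ v \<in> dlang \<Sigma> D)"
  shows "card I \<le> card (dstates D)"
proof (rule card_le_if_inj_on_rel[where r = "\<lambda>i q. q = drun D (u i) (dinit D)"])
  show "finite (dstates D)" using wf by (simp add: dfa_wf_def)
  have "dinit D \<in> dstates D" using wf by (simp add: dfa_wf_def)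
  then show "\<exists>q. q \<in> dstates D \<and> q = drun D (u i) (dinit D)" if "i \<in> I" for i
    using drun_in_states[OF wf] words that by blast
  show "i = j" if "i \<in> I" "j \<in> I" "q = drun D (u i) (dinit D)" "q = drun D (u j) (dinit D)" for i j q
    using dist[of i j] that words by (auto simp: dlang_append_iff)
qed

lemma min_dfa_size_ge_if_distinguishable:
  assumes "dfa_wf \<Sigma> D" and "u ` I \<subseteq> lists \<Sigma>"
    and "\<And>i j. i \<in> I \<Longrightarrow> j \<in> I \<Longrightarrow> i \<noteq> j \<Longrightarrow>
      \<exists>v\<in>lists \<Sigma>. (u i @ v \<in> dlang \<Sigma> D) \<noteq> (u j @ v \<in> dlang \<Sigma> D)"
  shows "card I \<le> min_dfa_size \<Sigma> (dlang \<Sigma> D)"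
proof -
  obtain D' :: "(nat, 'a) dfa" where D': "dfa_wf \<Sigma> D'" "dlang \<Sigma> D' = dlang \<Sigma> D"
      "card (dstates D') = min_dfa_size \<Sigma> (dlang \<Sigma> D)"
    using min_dfa_size_attained[OF assms(1)] .
  show ?thesis
    using card_le_dfa_states_if_distinguishable[OF D'(1) assms(2)] assms(3) D' by simp
qed

lemma subset_dfa_exists:
  fixes M :: "('q, 'a) nfa"
  assumes "finite R" and "{ninit M} \<in> R"
    and closed: "\<And>S a. S \<in> R \<Longrightarrow> a \<in> \<Sigma> \<Longrightarrow> (\<Union>q\<in>S. ndelta M q a) \<in> R"
  shows "\<exists>D :: ('q set, 'a) dfa. dfa_wf \<Sigma> D \<and> dlang \<Sigma> D = nlang \<Sigma> M \<and> card (dstates D) = card R"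
proof -
  define D :: "('q set, 'a) dfa" where "D = \<lparr>dstates = R, dinit = {ninit M},
     ddelta = (\<lambda>S a. \<Union>q\<in>S. ndelta M q a), dfinal = {S \<in> R. S \<inter> nfinal M \<noteq> {}}\<rparr>"
  have wf: "dfa_wf \<Sigma> D" using assms by (auto simp: dfa_wf_def D_def)
  have "drun D w (dinit D) = nsteps (ndelta M) {ninit M} w" for w
    by (simp add: D_def fold_subset_step_eq_nsteps)
  moreover have "drun D w (dinit D) \<in> R" if "w \<in> lists \<Sigma>" for w
    using drun_in_states[OF wf _ that] wf by (simp add: dfa_wf_def D_def)
  ultimately have "dlang \<Sigma> D = nlang \<Sigma> M"
    by (auto simp: dlang_def nlang_def D_def)
  with wf show ?thesis by (intro exI[of _ D]) (simp add: D_def)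
qed

lemma nfa_to_dfa:
  fixes M :: "('q, 'a) nfa"
  assumes "nfa_wf \<Sigma> M"
  shows "\<exists>D :: ('q set, 'a) dfa. dfa_wf \<Sigma> D \<and> dlang \<Sigma> D = nlang \<Sigma> M"
proof -
  have "finite (Pow (nstates M))" and "{ninit M} \<in> Pow (nstates M)"
    using assms by (auto simp: nfa_wf_def)
  moreover have "(\<Union>q\<in>S. ndelta M q a) \<in> Pow (nstates M)" if "S \<in> Pow (nstates M)" "a \<in> \<Sigma>" for S a
  proof -
    have "\<forall>q\<in>nstates M. ndelta M q a \<subseteq> nstates M" using assms that(2) by (simp add: nfa_wf_def)
    with that(1) show ?thesis by auto
  qed
  ultimately have "\<exists>D :: ('q set, 'a) dfa. dfa_wf \<Sigma> D \<and> dlang \<Sigma> D = nlang \<Sigma> M \<and>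
      card (dstates D) = card (Pow (nstates M))"
    by (rule subset_dfa_exists)
  then show ?thesis by blast
qed

lemma fooling_set_card_le_nfa_states:
  assumes wf: "nfa_wf \<Sigma> M"
    and accept: "\<And>i. i \<in> I \<Longrightarrow> x i @ y i \<in> nlang \<Sigma> M"
    and fool: "\<And>i j. i \<in> I \<Longrightarrow> j \<in> I \<Longrightarrow> i \<noteq> j \<Longrightarrow>
      x i @ y j \<notin> nlang \<Sigma> M \<or> x j @ y i \<notin> nlang \<Sigma> M"
  shows "card I \<le> card (nstates M)"
proof (rule card_le_if_inj_on_rel[where r = "\<lambda>i p. p \<in> nsteps (ndelta M) {ninit M} (x i) \<and>
    nsteps (ndelta M) {p} (y i) \<inter> nfinal M \<noteq> {}"])
  show "finite (nstates M)" using wf by (simp add: nfa_wf_def)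
  have init: "{ninit M} \<subseteq> nstates M" using wf by (simp add: nfa_wf_def)
  show "\<exists>p. p \<in> nstates M \<and> p \<in> nsteps (ndelta M) {ninit M} (x i) \<and>
      nsteps (ndelta M) {p} (y i) \<inter> nfinal M \<noteq> {}" if "i \<in> I" for i
    using accept[OF that] nfa_nsteps_in_states[OF wf init] unfolding nlang_append_iff by blast
  show "i = j" if "i \<in> I" "j \<in> I" "p \<in> nstates M"
    and "p \<in> nsteps (ndelta M) {ninit M} (x i) \<and> nsteps (ndelta M) {p} (y i) \<inter> nfinal M \<noteq> {}"
    and "p \<in> nsteps (ndelta M) {ninit M} (x j) \<and> nsteps (ndelta M) {p} (y j) \<inter> nfinal M \<noteq> {}"
    for i j p
    using that accept[OF that(1)] accept[OF that(2)] fool[OF that(1,2)]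
    unfolding nlang_append_iff by blast
qed

lemma nsteps_without_dead_state:
  assumes dead: "\<And>v. v \<in> lists \<Sigma> \<Longrightarrow> drun D v q \<notin> dfinal D" and "v \<in> lists \<Sigma>"
  shows "nsteps (\<lambda>p a. {ddelta D p a} - {q}) {p} v \<inter> dfinal D \<noteq> {} \<longleftrightarrow> drun D v p \<in> dfinal D"
  using assms(2)
proof (induction v arbitrary: p)
  case (Cons a v)
  then have v: "v \<in> lists \<Sigma>" by simp
  show ?case
  proof (cases "ddelta D p a = q")
    case True
    then show ?thesis using dead[OF v] by simp
  next
    case False
    then show ?thesis using Cons.IH[of "ddelta D p a"] v by simp
  qed
qed simp

lemma dfa_remove_dead_state:
  fixes D :: "('q, 'a) dfa"
  assumes wf: "dfa_wf \<Sigma> D" and "q \<in> dstates D" and "q \<noteq> dinit D"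
    and dead: "\<And>v. v \<in> lists \<Sigma> \<Longrightarrow> drun D v q \<notin> dfinal D"
  obtains N :: "('q, 'a) nfa"
  where "nfa_wf \<Sigma> N" "nlang \<Sigma> N = dlang \<Sigma> D" "card (nstates N) = card (dstates D) - 1"
proof
  define N :: "('q, 'a) nfa" where "N = \<lparr>nstates = dstates D - {q}, ninit = dinit D,
      ndelta = (\<lambda>p a. {ddelta D p a} - {q}), nfinal = dfinal D\<rparr>"
  have "q \<notin> dfinal D" using dead[of "[]"] by simp
  then show "nfa_wf \<Sigma> N" using wf assms(3) by (auto simp: nfa_wf_def dfa_wf_def N_def)
  show "nlang \<Sigma> N = dlang \<Sigma> D"
    using nsteps_without_dead_state[OF dead] by (auto simp: nlang_def dlang_def N_def)
  show "card (nstates N) = card (dstates D) - 1" using assms(2) by (simp add: N_def)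
qed

lemma prefix_closed_dead_state:
  assumes "prefix_closed (dlang \<Sigma> D)" and "w \<notin> dlang \<Sigma> D" and "w \<in> lists \<Sigma>" "v \<in> lists \<Sigma>"
  shows "drun D v (drun D w (dinit D)) \<notin> dfinal D"
  using assms dlang_append_iff[of w v \<Sigma> D] unfolding prefix_closed_def by blast

lemma nsteps_const_singleton: "nsteps (\<lambda>_ _. {q}) {q} w = {q}"
  by (induction w) simp_all

lemma one_state_nfa_exists:
  assumes "L = {} \<or> L = lists \<Sigma>"
  shows "\<exists>N :: (nat, 'a) nfa. nfa_wf \<Sigma> N \<and> nlang \<Sigma> N = L \<and> card (nstates N) = 1"
proof -
  define N :: "(nat, 'a) nfa" where "N = \<lparr>nstates = {0}, ninit = 0,
      ndelta = (\<lambda>_ _. {0}), nfinal = (if L = {} then {} else {0})\<rparr>"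
  have "nlang \<Sigma> N = L" using assms by (auto simp: N_def nlang_def nsteps_const_singleton)
  moreover have "nfa_wf \<Sigma> N" by (simp add: N_def nfa_wf_def)
  ultimately show ?thesis by (intro exI[of _ N]) (simp add: N_def)
qed

lemma minimal_nfa_card_pos: "minimal_nfa \<Sigma> M \<Longrightarrow> 0 < card (nstates M)"
  unfolding minimal_nfa_def nfa_wf_def by (auto simp: card_gt_0_iff)

lemma minimal_nfa_of_trivial_lang:
  assumes "minimal_nfa \<Sigma> M" and "nlang \<Sigma> M = {} \<or> nlang \<Sigma> M = lists \<Sigma>"
  shows "card (nstates M) = 1"
proof -
  obtain N :: "(nat, 'a) nfa" where "nfa_wf \<Sigma> N" "nlang \<Sigma> N = nlang \<Sigma> M" "card (nstates N) = 1"
    using one_state_nfa_exists[OF assms(2)] by blast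
  then have "card (nstates M) \<le> 1" using assms(1) unfolding minimal_nfa_def by metis
  with minimal_nfa_card_pos[OF assms(1)] show ?thesis by simp
qed

lemma minimal_nfa_lt_min_dfa_size:
  fixes M :: "('q, 'a) nfa"
  assumes min: "minimal_nfa \<Sigma> M" and pc: "prefix_closed (nlang \<Sigma> M)"
    and nonempty: "nlang \<Sigma> M \<noteq> {}" and not_univ: "nlang \<Sigma> M \<noteq> lists \<Sigma>"
  shows "card (nstates M) < min_dfa_size \<Sigma> (nlang \<Sigma> M)"
proof -
  let ?L = "nlang \<Sigma> M"
  obtain D0 :: "('q set, 'a) dfa" where "dfa_wf \<Sigma> D0" "dlang \<Sigma> D0 = ?L"
    using nfa_to_dfa min unfolding minimal_nfa_def by blast
  then obtain D :: "(nat, 'a) dfa"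
    where wf: "dfa_wf \<Sigma> D" and L: "dlang \<Sigma> D = ?L" and card_D: "card (dstates D) = min_dfa_size \<Sigma> ?L"
    by (metis min_dfa_size_attained)
  obtain w where w: "w \<in> lists \<Sigma>" "w \<notin> ?L" using not_univ unfolding nlang_def by blast
  have "[] \<in> ?L" using nonempty pc unfolding prefix_closed_def by (metis append_Nil ex_in_conv)
  define q where "q = drun D w (dinit D)"
  have dead: "drun D v q \<notin> dfinal D" if "v \<in> lists \<Sigma>" for v
    using prefix_closed_dead_state[of \<Sigma> D w v] pc w that L by (simp add: q_def)
  have init: "dinit D \<in> dstates D" using wf by (simp add: dfa_wf_def)
  then have q: "q \<in> dstates D" using drun_in_states[OF wf _ w(1)] by (simp add: q_def)
  have "dinit D \<in> dfinal D" using \<open>[] \<in> ?L\<close> unfolding L[symmetric] dlang_def by simp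
  then have "q \<noteq> dinit D" using dead[of "[]"] by auto
  then obtain N :: "(nat, 'a) nfa"
    where "nfa_wf \<Sigma> N" "nlang \<Sigma> N = ?L" "card (nstates N) = card (dstates D) - 1"
    using dfa_remove_dead_state[OF wf q _ dead] L by metis
  then have "card (nstates M) \<le> card (dstates D) - 1" using min unfolding minimal_nfa_def by metis
  moreover have "0 < card (dstates D)" using q wf by (auto simp: dfa_wf_def card_gt_0_iff)
  ultimately show ?thesis using card_D by simp
qed

locale jump_test_nfa =
  fixes n m :: nat and e :: "nat \<Rightarrow> nat set"
  assumes n_pos: "0 < n"
    and e_inj: "inj_on e {..<m}"
    and e_nonempty: "a < m \<Longrightarrow> e a \<noteq> {}"
    and e_subset: "a < m \<Longrightarrow> e a \<subseteq> {..<n}"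
    and singleton_in_range: "i < n \<Longrightarrow> {i} \<in> e ` {..<m}"
begin

text \<open>The extra letter \<open>m + n\<close> kills every state; without it the empty set need not be
  reachable (e.g. for \<open>n = m = 1\<close>).\<close>

definition alphabet :: "nat set" where
  "alphabet = {..m + n}"

definition trans :: "nat \<Rightarrow> nat \<Rightarrow> nat set" where
  "trans q a = (if a < m then (if q = 0 then e a else {})
                else if a < m + n \<and> q = a - m then {q} else {})"

definition aut :: "(nat, nat) nfa" where
  "aut = \<lparr>nstates = {..<n}, ninit = 0, ndelta = trans, nfinal = {..<n}\<rparr>"

abbreviation lang :: "nat list set" where
  "lang \<equiv> nlang alphabet aut"

abbreviation reach :: "nat list \<Rightarrow> nat set" where
  "reach u \<equiv> nsteps trans {0} u"

lemma trans_subset: "trans q a \<subseteq> {..<n}"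
  using e_subset by (auto simp: trans_def)

lemma reach_subset: "reach u \<subseteq> {..<n}"
  using nsteps_closed[of "{..<n}" UNIV trans "{0}" u] trans_subset n_pos by simp

lemma finite_alphabet: "finite alphabet"
  by (simp add: alphabet_def)

lemma card_nstates_aut: "card (nstates aut) = n"
  by (simp add: aut_def)

lemma aut_wf: "nfa_wf alphabet aut"
  using trans_subset n_pos by (simp add: nfa_wf_def aut_def)

lemma lang_eq: "lang = {u \<in> lists alphabet. reach u \<noteq> {}}"
  using reach_subset by (auto simp: nlang_def aut_def)

lemma step_jump: "a < m \<Longrightarrow> (\<Union>q\<in>S. trans q a) = (if 0 \<in> S then e a else {})"
  by (auto simp: trans_def)

lemma step_test: "i < n \<Longrightarrow> (\<Union>q\<in>S. trans q (m + i)) = (if i \<in> S then {i} else {})"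
  by (auto simp: trans_def)

lemma step_kill: "m + n \<le> a \<Longrightarrow> (\<Union>q\<in>S. trans q a) = {}"
  by (auto simp: trans_def)

lemma append_test_in_lang:
  assumes "u \<in> lists alphabet" and "i < n"
  shows "u @ [m + i] \<in> lang \<longleftrightarrow> i \<in> reach u"
proof -
  have "reach (u @ [m + i]) = (if i \<in> reach u then {i} else {})"
    using step_test[OF assms(2)] by (simp add: nsteps_append)
  with assms show ?thesis unfolding lang_eq by (simp add: alphabet_def)
qed

lemma reach_distinguishable:
  assumes "u \<in> lists alphabet" "v \<in> lists alphabet" and "reach u \<noteq> reach v"
  shows "\<exists>w\<in>lists alphabet. (u @ w \<in> lang) \<noteq> (v @ w \<in> lang)"
proof -
  obtain i where i: "(i \<in> reach u) \<noteq> (i \<in> reach v)" using assms(3) by blast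
  then have "i < n" using reach_subset by blast
  then have "[m + i] \<in> lists alphabet" by (simp add: alphabet_def)
  with i append_test_in_lang[OF assms(1) \<open>i < n\<close>] append_test_in_lang[OF assms(2) \<open>i < n\<close>]
  show ?thesis by blast
qed

lemma prefix_closed_lang: "prefix_closed lang"
  unfolding prefix_closed_def lang_eq by (auto simp: nsteps_append)

lemma minimal_nfa_aut: "minimal_nfa alphabet aut"
  unfolding minimal_nfa_def
proof (intro conjI allI impI)
  show "nfa_wf alphabet aut" by (rule aut_wf)
  fix M :: "(nat, nat) nfa"
  assume M: "nfa_wf alphabet M \<and> nlang alphabet M = lang"
  define k where "k i = inv_into {..<m} e {i}" for i
  have k: "k i < m" "e (k i) = {i}" if "i < n" for i
    using inv_into_into[OF singleton_in_range] f_inv_into_f[OF singleton_in_range] that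
    by (simp_all add: k_def)
  have reach_k: "reach [k i] = {i}" if "i < n" for i
    using k[OF that] by (simp add: trans_def)
  have "[k i] @ [m + j] \<in> lang \<longleftrightarrow> i = j" if "i < n" "j < n" for i j
  proof -
    have "[k i] \<in> lists alphabet" using k(1)[OF that(1)] by (simp add: alphabet_def)
    from append_test_in_lang[OF this that(2)] show ?thesis using reach_k[OF that(1)] by auto
  qed
  then have "card {..<n} \<le> card (nstates M)"
    using fooling_set_card_le_nfa_states[of alphabet M "{..<n}" "\<lambda>i. [k i]" "\<lambda>i. [m + i]"] M
    by auto
  then show "card (nstates aut) \<le> card (nstates M)" by (simp add: aut_def)
qed

lemma min_dfa_size_lang: "min_dfa_size alphabet lang = m + 1"
proof -
  let ?R = "insert {} (e ` {..<m})"
  have closed: "(\<Union>q\<in>S. trans q a) \<in> ?R" if "S \<in> ?R" for S a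
  proof -
    consider "a < m" | i where "a = m + i" "i < n" | "m + n \<le> a"
      by (metis add_diff_inverse_nat add_less_cancel_left not_less)
    then show ?thesis
      by cases (use step_jump step_kill step_test singleton_in_range in auto)
  qed
  have "{0} \<in> ?R" using singleton_in_range n_pos by blast
  moreover have "card ?R = m + 1"
    using e_inj e_nonempty by (auto simp: card_image card_insert_if)
  ultimately obtain D :: "(nat set, nat) dfa"
    where D: "dfa_wf alphabet D" "dlang alphabet D = lang" "card (dstates D) = m + 1"
    using subset_dfa_exists[of ?R aut alphabet] closed by (auto simp: aut_def)
  define u where "u j = (if j < m then [j] else [m + n])" for j
  have u: "u ` {..m} \<subseteq> lists alphabet" by (auto simp: u_def alphabet_def)
  have reach_u: "reach (u j) = (if j < m then e j else {})" for j
    by (simp add: u_def trans_def)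
  have reach_u_distinct: "reach (u i) \<noteq> reach (u j)" if "i \<in> {..m}" "j \<in> {..m}" "i \<noteq> j" for i j
    using that e_nonempty inj_onD[OF e_inj] by (cases "i < m"; cases "j < m") (auto simp: reach_u)
  have "\<exists>w\<in>lists alphabet. (u i @ w \<in> dlang alphabet D) \<noteq> (u j @ w \<in> dlang alphabet D)"
    if "i \<in> {..m}" "j \<in> {..m}" "i \<noteq> j" for i j
    unfolding D(2) using reach_distinguishable[OF _ _ reach_u_distinct[OF that]] u that by blast
  from min_dfa_size_ge_if_distinguishable[OF D(1) u this]
  have "card {..m} \<le> min_dfa_size alphabet lang" using D(2) by simp
  moreover have "min_dfa_size alphabet lang \<le> m + 1" using min_dfa_size_le[OF D(1)] D by simp
  ultimately show ?thesis by simp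
qed

end

lemma jump_test_nfa_exists:
  assumes "0 < n" "n \<le> m" "m < 2 ^ n"
  shows "\<exists>e. jump_test_nfa n m e"
proof -
  let ?S = "(\<lambda>i. {i}) ` {..<n}" and ?P = "Pow {..<n} - {{}}"
  have "card ?S \<le> m" using assms(2) by (simp add: card_image)
  moreover have "m \<le> card ?P" using assms(3) by (simp add: card_Pow)
  moreover have "?S \<subseteq> ?P" and fin: "finite ?P" by auto
  ultimately have "\<exists>F. ?S \<subseteq> F \<and> F \<subseteq> ?P \<and> card F = m"
    by (rule exists_subset_between)
  then obtain F where F: "?S \<subseteq> F" "F \<subseteq> ?P" "card F = m" by blast
  have "finite F" using F(2) fin by (rule finite_subset)
  then obtain e where e: "bij_betw e {..<m} F"
    using ex_bij_betw_nat_finite F(3) atLeast0LessThan by metis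
  then have range: "e ` {..<m} = F" and "inj_on e {..<m}" by (simp_all add: bij_betw_def)
  have "jump_test_nfa n m e"
  proof
    show "0 < n" by (rule assms(1))
    show "inj_on e {..<m}" by fact
    show "e a \<noteq> {}" "e a \<subseteq> {..<n}" if "a < m" for a
      using that range F(2) by auto
    show "{i} \<in> e ` {..<m}" if "i < n" for i
      using that range F(1) by auto
  qed
  then show ?thesis by blast
qed

theorem mainTheorem9:
  shows "(\<forall>n \<alpha> :: nat. 1 \<le> n \<and> n < \<alpha> \<and> \<alpha> \<le> 2 ^ n \<longrightarrow>
            (\<exists>(\<Sigma> :: nat set) (M :: (nat, nat) nfa).
               finite \<Sigma> \<and> minimal_nfa \<Sigma> M \<and> card (nstates M) = n \<and>
               prefix_closed (nlang \<Sigma> M) \<and> min_dfa_size \<Sigma> (nlang \<Sigma> M) = \<alpha>))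
       \<and> (\<forall>(\<Sigma> :: 'a set) (M :: ('q, 'a) nfa) (n :: nat).
            finite \<Sigma> \<and> minimal_nfa \<Sigma> M \<and> card (nstates M) = n \<and>
            prefix_closed (nlang \<Sigma> M) \<and> min_dfa_size \<Sigma> (nlang \<Sigma> M) = n \<longrightarrow> n = 1)"
proof (intro conjI allI impI)
  fix n \<alpha> :: nat
  assume bounds: "1 \<le> n \<and> n < \<alpha> \<and> \<alpha> \<le> 2 ^ n"
  then have "0 < n" "n \<le> \<alpha> - 1" "\<alpha> - 1 < 2 ^ n" by auto
  then obtain e where "jump_test_nfa n (\<alpha> - 1) e" using jump_test_nfa_exists by blast
  then interpret jump_test_nfa n "\<alpha> - 1" e .
  have "min_dfa_size alphabet lang = \<alpha>"
    using min_dfa_size_lang bounds by simp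
  then show "\<exists>(\<Sigma> :: nat set) (M :: (nat, nat) nfa).
      finite \<Sigma> \<and> minimal_nfa \<Sigma> M \<and> card (nstates M) = n \<and>
      prefix_closed (nlang \<Sigma> M) \<and> min_dfa_size \<Sigma> (nlang \<Sigma> M) = \<alpha>"
    using finite_alphabet minimal_nfa_aut card_nstates_aut prefix_closed_lang by blast
next
  fix \<Sigma> :: "'a set" and M :: "('q, 'a) nfa" and n
  assume "finite \<Sigma> \<and> minimal_nfa \<Sigma> M \<and> card (nstates M) = n \<and>
    prefix_closed (nlang \<Sigma> M) \<and> min_dfa_size \<Sigma> (nlang \<Sigma> M) = n"
  then show "n = 1"
    using minimal_nfa_of_trivial_lang minimal_nfa_lt_min_dfa_size by (metis less_irrefl)
qed

end
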